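(* Let $\mathcal H$ be a complex Hilbert space and $T\in\mathcal B(\mathcal H)$ positive. Then for all $x,y\in\mathcal H$ and all $t\in[0,1]$: if $\|Tx\|\,\|Ty\|\neq0$, $$|\langle Tx,y\rangle|\le\left(\|T^tx\|-\frac{\inf_{\lambda\in\mathbb C}\|T^tx-\lambda T^{1-t}y\|^2}{2\|T^tx\|}\right)\|T^{1-t}y\|,$$ and if $\|Tx\|\,\|Ty\|=0$, $|\langle Tx,y\rangle|\le\|T^tx\|\,\|T^{1-t}y\|$. In particular, for $t=\frac12$: if $\|Tx\|\,\|Ty\|\ne0$, $$|\langle Tx,y\rangle|\le\left(\|T^{1/2}x\|-\frac{\inf_{\lambda\in\mathbb C}\|T^{1/2}(x-\lambda y)\|^2}{2\|T^{1/2}x\|}\right)\|T^{1/2}y\|,$$ and if $\|Tx\|\,\|Ty\|=0$, $|\langle Tx,y\rangle|\le\|T^{1/2}x\|\,\|T^{1/2}y\|$.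
   Context: Powers $T^s$ of a positive operator are defined by functional calculus, with $T^0=I$. *)

theory Defs
  imports "HOL-Analysis.Analysis" "HOL-Computational_Algebra.Polynomial"
begin

class complex_inner = real_normed_vector +
  fixes scaleC :: "complex \<Rightarrow> 'a \<Rightarrow> 'a"
    and cinner :: "'a \<Rightarrow> 'a \<Rightarrow> complex"
  assumes scaleC_add_right: "scaleC a (x + y) = scaleC a x + scaleC a y"
    and scaleC_add_left: "scaleC (a + b) x = scaleC a x + scaleC b x"
    and scaleC_scaleC: "scaleC a (scaleC b x) = scaleC (a * b) x"
    and scaleC_one: "scaleC 1 x = x"
    and scaleR_scaleC: "scaleR r x = scaleC (complex_of_real r) x"
    and cinner_commute: "cinner x y = cnj (cinner y x)"
    and cinner_add_left: "cinner (x + y) z = cinner x z + cinner y z"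
    and cinner_scaleC_left: "cinner (scaleC a x) y = cnj a * cinner x y"
    and cinner_self_ge_zero: "0 \<le> Re (cinner x x)"
    and cinner_self_eq_zero: "cinner x x = 0 \<longleftrightarrow> x = 0"
    and norm_eq_sqrt_cinner: "norm x = sqrt (Re (cinner x x))"

class chilbert = complex_inner + banach

definition bounded_clinear :: "('a::complex_inner \<Rightarrow> 'b::complex_inner) \<Rightarrow> bool" where
  "bounded_clinear T \<longleftrightarrow> bounded_linear T \<and> (\<forall>c x. T (scaleC c x) = scaleC c (T x))"

definition positive_op :: "('a::chilbert \<Rightarrow> 'a) \<Rightarrow> bool" where
  "positive_op T \<longleftrightarrow> bounded_clinear T \<and>
     (\<forall>x. Im (cinner x (T x)) = 0 \<and> 0 \<le> Re (cinner x (T x)))"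

definition poly_op :: "real poly \<Rightarrow> ('a::chilbert \<Rightarrow> 'a) \<Rightarrow> 'a \<Rightarrow> 'a" where
  "poly_op p T x = (\<Sum>i\<le>degree p. coeff p i *\<^sub>R (T ^^ i) x)"

text \<open>Continuous functional calculus for a positive operator T: f(T) is the
operator-norm limit of p_n(T) for any sequence of real polynomials p_n converging
uniformly to f on [0, ||T||] (which contains the spectrum of T).\<close>
definition fcalc :: "('a::chilbert \<Rightarrow> 'a) \<Rightarrow> (real \<Rightarrow> real) \<Rightarrow> 'a \<Rightarrow> 'a" where
  "fcalc T f = (THE S. bounded_clinear S \<and>
     (\<forall>p :: nat \<Rightarrow> real poly.
        (\<forall>e>0. \<forall>\<^sub>F n in sequentially. \<forall>u\<in>{0..onorm T}. \<bar>poly (p n) u - f u\<bar> < e)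
        \<longrightarrow> ((\<lambda>n. onorm (\<lambda>x. poly_op (p n) T x - S x)) \<longlonglongrightarrow> 0)))"

definition op_pow :: "('a::chilbert \<Rightarrow> 'a) \<Rightarrow> real \<Rightarrow> 'a \<Rightarrow> 'a" where
  "op_pow T s = (if s = 0 then id else fcalc T (\<lambda>u. u powr s))"

end

(*
  With a = T^t x and b = T^(1-t) y, self-adjointness of T^(1-t) and T^(1-t) T^t = T give
  <Tx, y> = <a, b>. The claim is then a refinement of Cauchy-Schwarz: the infimum over lambda
  is at most the value at the projection coefficient lambda = <b, a> / <b, b>, which equals
  |a|^2 - |<a, b>|^2 / |b|^2, and AM-GM turns this into the bound.
  Both bounds hold for all x and y, so the case distinction on |Tx| |Ty| plays no role.

  The powers T^s are given by the continuous functional calculus, which has to be made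
  effective. A real polynomial positive on [0, |T|] factors into real linear and quadratic
  factors, hence is a sum of terms s^2 w with w in {1, X, |T| - X}; as s(T) w(T) s(T) is
  positive for each such term, |p(T)| <= sup |p| on [0, |T|]. Uniform polynomial approximants
  of f therefore converge in operator norm, and the limit f(T) is self-adjoint and
  multiplicative in f, so that T^s T^t = T^(s+t).
*)

theory Submission
  imports Defs "HOL-Computational_Algebra.Fundamental_Theorem_Algebra"
begin

section \<open>Complex inner product spaces\<close>

global_interpretation scaleC: module "scaleC :: complex \<Rightarrow> 'a \<Rightarrow> 'a::complex_inner"
  by unfold_locales (simp_all add: scaleC_add_right scaleC_add_left scaleC_scaleC scaleC_one)

lemma cinner_add_right: "cinner x (y + z) = cinner x y + cinner x z"
  by (subst (1 2 3) cinner_commute) (simp add: cinner_add_left)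

lemma cinner_scaleC_right: "cinner x (scaleC a y) = a * cinner x y"
  by (subst (1 2) cinner_commute) (simp add: cinner_scaleC_left)

lemma cinner_self: "cinner x x = of_real ((norm x)\<^sup>2)"
proof -
  have "Im (cinner x x) = 0"
    using arg_cong[OF cinner_commute[of x x], of Im] by simp
  then show ?thesis
    using norm_eq_sqrt_cinner[of x] cinner_self_ge_zero[of x] by (simp add: complex_eq_iff)
qed

lemma norm_scaleC: "norm (scaleC c x) = cmod c * norm x"
proof -
  have "of_real ((norm (scaleC c x))\<^sup>2) = cinner (scaleC c x) (scaleC c x)"
    by (simp add: cinner_self)
  also have "\<dots> = cnj c * c * cinner x x"
    by (simp add: cinner_scaleC_left cinner_scaleC_right)
  also have "\<dots> = of_real ((cmod c * norm x)\<^sup>2)"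
    using complex_norm_square[of c] by (simp add: cinner_self power_mult_distrib mult.commute)
  finally have "(norm (scaleC c x))\<^sup>2 = (cmod c * norm x)\<^sup>2"
    by (simp only: of_real_eq_iff)
  then show ?thesis
    by (simp add: power2_eq_iff_nonneg)
qed

lemma bounded_linear_scaleC: "bounded_linear (scaleC c)"
  by (rule bounded_linear_intro[where K = "cmod c"])
    (simp_all add: scaleC_add_right scaleR_scaleC scaleC_scaleC mult.commute norm_scaleC)

lemma norm_diff_scaleC_power2:
  "(norm (x - scaleC c y))\<^sup>2 = (norm x)\<^sup>2 - 2 * Re (c * cinner x y) + (cmod c)\<^sup>2 * (norm y)\<^sup>2"
proof -
  have "of_real ((norm (x - scaleC c y))\<^sup>2) = cinner (x + scaleC (- c) y) (x + scaleC (- c) y)"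
    by (simp add: cinner_self)
  also have "\<dots> = cinner x x - c * cinner x y - cnj c * cinner y x + cnj c * c * cinner y y"
    by (simp only: cinner_add_left cinner_add_right cinner_scaleC_left cinner_scaleC_right)
      (simp add: algebra_simps)
  also have "\<dots> = of_real ((norm x)\<^sup>2 - 2 * Re (c * cinner x y) + (cmod c)\<^sup>2 * (norm y)\<^sup>2)"
    using cinner_commute[of y x] complex_norm_square[of c]
    by (simp add: cinner_self complex_add_cnj mult.commute diff_diff_add flip: complex_cnj_mult)
  finally show ?thesis
    by (simp only: of_real_eq_iff)
qed

lemma norm_diff_projection_power2:
  assumes "y \<noteq> 0"
  shows "(norm (x - scaleC (cinner y x / cinner y y) y))\<^sup>2 = (norm x)\<^sup>2 - (cmod (cinner x y))\<^sup>2 / (norm y)\<^sup>2"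
proof -
  define l where "l = cinner y x / cinner y y"
  have l: "l = cnj (cinner x y) / of_real ((norm y)\<^sup>2)"
    unfolding l_def using cinner_commute[of y x] by (simp add: cinner_self)
  have "l * cinner x y = of_real ((cmod (cinner x y))\<^sup>2 / (norm y)\<^sup>2)"
    unfolding l using complex_norm_square[of "cinner x y"] by (simp add: mult.commute)
  then have re: "Re (l * cinner x y) = (cmod (cinner x y))\<^sup>2 / (norm y)\<^sup>2"
    by simp
  have cm: "cmod l = cmod (cinner x y) / (norm y)\<^sup>2"
    unfolding l by (simp add: norm_divide norm_power)
  have "(norm (x - scaleC l y))\<^sup>2
      = (norm x)\<^sup>2 - 2 * ((cmod (cinner x y))\<^sup>2 / (norm y)\<^sup>2) + (cmod (cinner x y) / (norm y)\<^sup>2)\<^sup>2 * (norm y)\<^sup>2"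
    unfolding norm_diff_scaleC_power2 re cm ..
  also have "\<dots> = (norm x)\<^sup>2 - (cmod (cinner x y))\<^sup>2 / (norm y)\<^sup>2"
    using assms by (simp add: power_divide power2_eq_square)
  finally show ?thesis
    unfolding l_def .
qed

lemma cauchy_schwarz: "cmod (cinner x y) \<le> norm x * norm y"
proof (cases "y = 0")
  case True
  then show ?thesis
    using cinner_add_right[of x 0 0] by simp
next
  case False
  have "(cmod (cinner x y))\<^sup>2 / (norm y)\<^sup>2 \<le> (norm x)\<^sup>2"
    using norm_diff_projection_power2[OF False, of x]
      zero_le_power2[of "norm (x - scaleC (cinner y x / cinner y y) y)"] by linarith
  then have "(cmod (cinner x y))\<^sup>2 \<le> (norm x * norm y)\<^sup>2"
    using False by (simp add: field_simps power_mult_distrib)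
  then show ?thesis
    by (simp add: power2_le_iff_abs_le)
qed

global_interpretation cinner: bounded_bilinear "cinner :: 'a::complex_inner \<Rightarrow> 'a \<Rightarrow> complex"
proof
  show "\<exists>K. \<forall>x y. norm (cinner x y) \<le> norm x * norm y * K"
    by (rule exI[of _ 1]) (simp add: cauchy_schwarz)
qed (simp_all add: cinner_add_left cinner_add_right scaleR_scaleC cinner_scaleC_left cinner_scaleC_right
    scaleR_conv_of_real)

lemma refined_cauchy_schwarz:
  "cmod (cinner a b) \<le> (norm a - (INF l::complex. (norm (a - scaleC l b))\<^sup>2) / (2 * norm a)) * norm b"
proof (cases "a = 0 \<or> b = 0")
  case True
  then show ?thesis
    by (auto simp: cinner.zero_left cinner.zero_right)
next
  case False
  define c where "c = cmod (cinner a b)"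
  define I where "I = (INF l::complex. (norm (a - scaleC l b))\<^sup>2)"
  have a: "norm a > 0" and b: "norm b > 0"
    using False by auto
  have "I \<le> (norm (a - scaleC (cinner b a / cinner b b) b))\<^sup>2"
    unfolding I_def by (rule cINF_lower) (auto intro: bdd_belowI[where m = 0])
  then have "I \<le> (norm a)\<^sup>2 - c\<^sup>2 / (norm b)\<^sup>2"
    using False by (simp add: norm_diff_projection_power2 c_def)
  then have "(norm a * norm b)\<^sup>2 + c\<^sup>2 \<le> 2 * (norm a)\<^sup>2 * (norm b)\<^sup>2 - I * (norm b)\<^sup>2"
    using b by (simp add: field_simps power_mult_distrib)
  then have "((norm a * norm b)\<^sup>2 + c\<^sup>2) / (2 * (norm a * norm b))
      \<le> (2 * (norm a)\<^sup>2 * (norm b)\<^sup>2 - I * (norm b)\<^sup>2) / (2 * (norm a * norm b))"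
    using a b by (simp add: divide_right_mono)
  also have "\<dots> = (norm a - I / (2 * norm a)) * norm b"
    using a b by (simp add: field_simps power2_eq_square)
  finally have "((norm a * norm b)\<^sup>2 + c\<^sup>2) / (2 * (norm a * norm b)) \<le> (norm a - I / (2 * norm a)) * norm b" .
  moreover have "c \<le> ((norm a * norm b)\<^sup>2 + c\<^sup>2) / (2 * (norm a * norm b))"
    \<comment> \<open>AM-GM\<close>
    using a b sum_squares_bound[of "norm a * norm b" c] by (simp add: pos_le_divide_eq algebra_simps)
  ultimately show ?thesis
    unfolding c_def I_def by linarith
qed

section \<open>Polynomials in a self-adjoint operator\<close>

definition selfadjoint :: "('a::complex_inner \<Rightarrow> 'a) \<Rightarrow> bool" where
  "selfadjoint T \<longleftrightarrow> (\<forall>x y. cinner (T x) y = cinner x (T y))"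

lemma bounded_clinear_imp_bounded_linear: "bounded_clinear T \<Longrightarrow> bounded_linear T"
  by (simp add: bounded_clinear_def)

lemma bounded_clinear_scaleC: "bounded_clinear T \<Longrightarrow> T (scaleC c x) = scaleC c (T x)"
  by (simp add: bounded_clinear_def)

lemma positive_op_bounded_clinear: "positive_op T \<Longrightarrow> bounded_clinear T"
  by (simp add: positive_op_def)

lemma positive_op_bounded_linear: "positive_op T \<Longrightarrow> bounded_linear T"
  by (simp add: positive_op_def bounded_clinear_def)

lemma positive_op_selfadjoint:
  assumes "positive_op T"
  shows "selfadjoint T"
  unfolding selfadjoint_def
proof (intro allI)
  fix x y
  have lin: "linear T" and sc: "\<And>c x. T (scaleC c x) = scaleC c (T x)"
    using assms by (auto simp: positive_op_def bounded_clinear_def bounded_linear.linear)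
  have real: "Im (cinner v (T v)) = 0" for v
    using assms by (simp add: positive_op_def)
  define A where "A = cinner x (T y)"
  define B where "B = cinner y (T x)"
  \<comment> \<open>polarization: test realness on \<open>x + y\<close> and \<open>x + i y\<close>\<close>
  have "cinner (x + y) (T (x + y)) = cinner x (T x) + cinner y (T y) + A + B"
    by (simp add: A_def B_def linear_add[OF lin] cinner_add_left cinner_add_right)
  then have "Im (A + B) = 0"
    using real[of "x + y"] real[of x] real[of y] by simp
  moreover have "cinner (x + scaleC \<i> y) (T (x + scaleC \<i> y)) = cinner x (T x) + cinner y (T y) + \<i> * A - \<i> * B"
    by (simp add: A_def B_def linear_add[OF lin] sc cinner_add_left cinner_add_right
        cinner_scaleC_left cinner_scaleC_right algebra_simps)
  then have "Re (A - B) = 0"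
    using real[of "x + scaleC \<i> y"] real[of x] real[of y] by simp
  ultimately have "A = cnj B"
    by (simp add: complex_eq_iff)
  then show "cinner (T x) y = cinner x (T y)"
    unfolding A_def B_def by (metis cinner_commute)
qed

lemma poly_op_degree_le:
  "degree p \<le> n \<Longrightarrow> poly_op p T x = (\<Sum>i\<le>n. coeff p i *\<^sub>R (T ^^ i) x)"
  unfolding poly_op_def by (rule sum.mono_neutral_left) (auto simp: coeff_eq_0)

lemma poly_op_0 [simp]: "poly_op 0 T x = 0"
  by (simp add: poly_op_def)

lemma poly_op_pCons:
  assumes "linear T"
  shows "poly_op (pCons a p) T x = a *\<^sub>R x + T (poly_op p T x)"
proof -
  have "poly_op (pCons a p) T x = (\<Sum>i\<le>Suc (degree p). coeff (pCons a p) i *\<^sub>R (T ^^ i) x)"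
    by (rule poly_op_degree_le) (simp add: degree_pCons_le)
  also have "\<dots> = a *\<^sub>R x + (\<Sum>i\<le>degree p. coeff p i *\<^sub>R T ((T ^^ i) x))"
    unfolding sum.atMost_Suc_shift by simp
  also have "\<dots> = a *\<^sub>R x + T (poly_op p T x)"
    by (simp add: poly_op_def linear_sum[OF assms] linear_scale[OF assms])
  finally show ?thesis .
qed

lemma poly_op_const:
  assumes "linear T"
  shows "poly_op [:c:] T x = c *\<^sub>R x"
  using poly_op_pCons[OF assms, of c 0 x] by (simp add: linear_0[OF assms])

lemma poly_op_X:
  assumes "linear T"
  shows "poly_op [:0, 1:] T x = T x"
  using poly_op_pCons[OF assms, of 0 "[:1:]" x] by (simp add: poly_op_const[OF assms])

lemma poly_op_add: "poly_op (p + q) T x = poly_op p T x + poly_op q T x"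
proof -
  define n where "n = max (degree p) (degree q)"
  have "degree (p + q) \<le> n" "degree p \<le> n" "degree q \<le> n"
    by (auto simp: n_def intro: degree_add_le)
  then show ?thesis
    by (simp add: poly_op_degree_le scaleR_add_left sum.distrib)
qed

lemma poly_op_smult: "poly_op (smult c p) T x = c *\<^sub>R poly_op p T x"
  using degree_smult_le[of c p] by (simp add: poly_op_degree_le[of _ "degree p"] scaleR_sum_right)

lemma poly_op_diff: "poly_op (p - q) T x = poly_op p T x - poly_op q T x"
  using poly_op_add[of p "- q" T x] poly_op_smult[of "- 1" q T x] by simp

lemma poly_op_mult:
  assumes "linear T"
  shows "poly_op (p * q) T x = poly_op p T (poly_op q T x)"
proof (induction p arbitrary: x)
  case (pCons a p)
  have "poly_op (pCons 0 (p * q)) T x = T (poly_op p T (poly_op q T x))"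
    by (simp add: poly_op_pCons[OF assms] pCons.IH linear_0[OF assms])
  then show ?case
    by (simp add: poly_op_add poly_op_smult poly_op_pCons[OF assms])
qed simp

lemma bounded_linear_poly_op:
  assumes "bounded_linear T"
  shows "bounded_linear (poly_op p T)"
proof (induction p)
  case (pCons a p)
  have "poly_op (pCons a p) T = (\<lambda>x. a *\<^sub>R x + T (poly_op p T x))"
    using poly_op_pCons[OF bounded_linear.linear[OF assms]] by blast
  then show ?case
    by (simp add: bounded_linear_add bounded_linear_scaleR_right bounded_linear_compose[OF assms pCons.IH])
qed (simp add: poly_op_def[abs_def])

lemma poly_op_scaleC:
  assumes "bounded_clinear T"
  shows "poly_op p T (scaleC c x) = scaleC c (poly_op p T x)"
proof (induction p arbitrary: x)
  case (pCons a p)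
  have lin: "linear T"
    using assms by (simp add: bounded_clinear_def bounded_linear.linear)
  show ?case
    using assms by (simp add: poly_op_pCons[OF lin] pCons.IH bounded_clinear_scaleC scaleC_add_right scaleR_scaleC mult.commute)
qed simp

lemma poly_op_commute:
  assumes "linear T"
  shows "poly_op p T (T x) = T (poly_op p T x)"
  by (induction p arbitrary: x) (simp_all add: poly_op_pCons[OF assms] linear_add[OF assms] linear_scale[OF assms] linear_0[OF assms])

lemma selfadjoint_poly_op:
  assumes "linear T" "selfadjoint T"
  shows "cinner (poly_op p T x) y = cinner x (poly_op p T y)"
proof (induction p arbitrary: x y)
  case (pCons a p)
  have "cinner (T (poly_op p T x)) y = cinner x (T (poly_op p T y))"
    using assms(2) pCons.IH by (simp add: selfadjoint_def poly_op_commute[OF assms(1)])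
  then show ?case
    by (simp add: poly_op_pCons[OF assms(1)] cinner.add_left cinner.add_right cinner.scaleR_left cinner.scaleR_right)
qed (simp add: cinner.zero_left cinner.zero_right)

section \<open>Certificates of nonnegativity on an interval\<close>

lemma map_poly_of_real_add:
  "map_poly of_real (p + q) = (map_poly of_real p + map_poly of_real q :: 'a::{real_algebra_1,comm_ring_1} poly)"
  by (rule poly_eqI) (simp add: coeff_map_poly)

lemma map_poly_of_real_mult:
  "map_poly of_real (p * q) = (map_poly of_real p * map_poly of_real q :: 'a::{real_algebra_1,comm_ring_1} poly)"
  by (rule poly_eqI) (simp add: coeff_map_poly coeff_mult)

lemma poly_map_poly_of_real:
  "poly (map_poly of_real p) (of_real x) = (of_real (poly p x) :: 'a::{real_algebra_1,comm_ring_1})"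
  by (induction p) (auto simp: map_poly_pCons)

lemma real_poly_linear_or_quadratic_factor:
  fixes q :: "real poly"
  assumes "degree q \<noteq> 0"
  shows "(\<exists>r d. q = [:-r, 1:] * d) \<or> (\<exists>a b d. b \<noteq> 0 \<and> q = [:a\<^sup>2 + b\<^sup>2, -2 * a, 1:] * d)"
proof -
  have "\<not> constant (poly (map_poly complex_of_real q))"
    using assms by (simp add: constant_degree degree_map_poly)
  then obtain z where z: "poly (map_poly complex_of_real q) z = 0"
    using fundamental_theorem_of_algebra by blast
  show ?thesis
  proof (cases "Im z = 0")
    case True
    then have "z = of_real (Re z)"
      by (simp add: complex_eq_iff)
    then have "poly q (Re z) = 0"
      using z by (metis of_real_eq_0_iff poly_map_poly_of_real)
    then show ?thesis
      by (metis poly_eq_0_iff_dvd dvdE)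
  next
    case False
    \<comment> \<open>\<open>Q = (X - z) (X - cnj z)\<close>\<close>
    define Q where "Q = [:(Re z)\<^sup>2 + (Im z)\<^sup>2, -2 * Re z, 1:]"
    define r where "r = q mod Q"
    have "degree r \<le> 1"
      using degree_mod_less[of Q q] by (auto simp: r_def Q_def less_Suc_eq_le)
    then have r: "r = [:coeff r 0, coeff r 1:]"
      by (intro poly_eqI) (auto simp: coeff_eq_0 coeff_pCons split: nat.split)
    have "poly (map_poly complex_of_real Q) z = 0"
      by (simp add: Q_def map_poly_pCons complex_eq_iff power2_eq_square algebra_simps)
    then have "poly (map_poly complex_of_real r) z = 0"
      using z div_mult_mod_eq[of q Q]
      by (metis map_poly_of_real_add map_poly_of_real_mult poly_add poly_mult mult_zero_right add_0 r_def)
    then have "of_real (coeff r 0) + of_real (coeff r 1) * z = 0"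
      by (subst (asm) r) (simp add: map_poly_pCons mult.commute)
    then have "coeff r 0 = 0 \<and> coeff r 1 = 0"
      using False by (auto simp: complex_eq_iff)
    then have "r = 0"
      by (subst r) simp
    then have "q = Q * (q div Q)"
      using div_mult_mod_eq[of q Q] by (simp add: r_def mult.commute)
    then show ?thesis
      using False unfolding Q_def by blast
  qed
qed

text \<open>A certificate of nonnegativity on \<open>[0, M]\<close> that, unlike pointwise nonnegativity, transfers
  to every positive operator of norm at most \<open>M\<close>.\<close>
inductive sos_cert :: "real \<Rightarrow> real poly \<Rightarrow> bool" for M where
  sos_cert_weighted_square: "w \<in> {1, [:0, 1:], [:M, -1:]} \<Longrightarrow> sos_cert M (s * s * w)"
| sos_cert_add: "sos_cert M p \<Longrightarrow> sos_cert M q \<Longrightarrow> sos_cert M (p + q)"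

lemma sos_cert_square: "sos_cert M (s * s)"
  using sos_cert_weighted_square[of 1 M s] by simp

lemma sos_cert_weight: "w \<in> {1, [:0, 1:], [:M, -1:]} \<Longrightarrow> sos_cert M w"
  using sos_cert_weighted_square[of w M 1] by simp

lemma sos_cert_mult_square: "sos_cert M p \<Longrightarrow> sos_cert M (s * s * p)"
proof (induction rule: sos_cert.induct)
  case (sos_cert_weighted_square w t)
  then show ?case
    using sos_cert.sos_cert_weighted_square[of w M "s * t"] by (simp add: algebra_simps)
qed (simp add: distrib_left sos_cert_add)

lemma sos_cert_weight_mult:
  assumes "M > 0" "w \<in> {1, [:0, 1:], [:M, -1:]}" "w' \<in> {1, [:0, 1:], [:M, -1:]}"
  shows "sos_cert M (w * w')"
proof -
  define c where "c = sqrt (1 / M)"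
  \<comment> \<open>\<open>X (M - X) = ((M - X)\<^sup>2 X + X\<^sup>2 (M - X)) / M\<close>\<close>
  have "[:0, 1:] * [:M, -1:] = ([:c:] * [:M, -1:]) * ([:c:] * [:M, -1:]) * [:0, 1:]
      + ([:c:] * [:0, 1:]) * ([:c:] * [:0, 1:]) * [:M, -1:]"
    using assms(1)
    by (simp add: c_def algebra_simps flip: poly_eq_poly_eq_iff)
  then have "sos_cert M ([:0, 1:] * [:M, -1:])"
    by (metis sos_cert.simps insertCI)
  then show ?thesis
    using assms(2,3) sos_cert_square sos_cert_weight by (auto simp: mult.commute)
qed

lemma sos_cert_mult:
  assumes "M > 0" "sos_cert M p" "sos_cert M q"
  shows "sos_cert M (p * q)"
  using assms(2)
proof (induction rule: sos_cert.induct)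
  case (sos_cert_weighted_square w s)
  from assms(3) show ?case
  proof (induction rule: sos_cert.induct)
    case (sos_cert_weighted_square w' t)
    have "s * s * w * (t * t * w') = (s * t) * (s * t) * (w * w')"
      by (simp add: algebra_simps)
    then show ?case
      using sos_cert_mult_square sos_cert_weight_mult assms(1) sos_cert_weighted_square.hyps
        \<open>w \<in> _\<close> by metis
  qed (simp add: distrib_left sos_cert_add)
qed (simp add: distrib_right sos_cert_add)

lemma cinner_poly_op_weight_nonneg:
  assumes "positive_op T" "onorm T \<le> M" "w \<in> {1, [:0, 1:], [:M, -1:]}"
  shows "0 \<le> Re (cinner v (poly_op w T v))"
proof -
  have lin: "linear T"
    using assms(1) by (simp add: positive_op_bounded_linear bounded_linear.linear)
  have Tv: "0 \<le> Re (cinner v (T v))"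
    using assms(1) by (simp add: positive_op_def)
  have "Re (cinner v (T v)) \<le> M * (norm v)\<^sup>2"
  proof -
    have "Re (cinner v (T v)) \<le> norm v * norm (T v)"
      using complex_Re_le_cmod cauchy_schwarz order_trans by blast
    also have "\<dots> \<le> norm v * (M * norm v)"
      using order_trans[OF onorm[OF positive_op_bounded_linear[OF assms(1)]] mult_right_mono[OF assms(2) norm_ge_zero]]
      by (rule mult_left_mono) simp
    finally show ?thesis
      by (simp add: power2_eq_square algebra_simps)
  qed
  moreover have "poly_op [:M, -1:] T v = M *\<^sub>R v - T v"
    using poly_op_pCons[OF lin, of M "[:-1:]" v] by (simp add: poly_op_const[OF lin] linear_neg[OF lin])
  ultimately show ?thesis
    using assms(3) Tv
    by (auto simp: one_pCons poly_op_const[OF lin] poly_op_X[OF lin] cinner_self cinner.diff_right cinner.scaleR_right)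
qed

lemma sos_cert_poly_op_nonneg:
  assumes "positive_op T" "onorm T \<le> M" "sos_cert M p"
  shows "0 \<le> Re (cinner x (poly_op p T x))"
  using assms(3)
proof (induction arbitrary: x)
  case (sos_cert_weighted_square w s)
  have lin: "linear T"
    using assms(1) by (simp add: positive_op_bounded_linear bounded_linear.linear)
  have "s * s * w = s * (w * s)"
    by (simp add: algebra_simps)
  then have "poly_op (s * s * w) T x = poly_op s T (poly_op w T (poly_op s T x))"
    by (simp only: poly_op_mult[OF lin])
  then have "cinner x (poly_op (s * s * w) T x) = cinner (poly_op s T x) (poly_op w T (poly_op s T x))"
    by (simp add: selfadjoint_poly_op[OF lin positive_op_selfadjoint[OF assms(1)]])
  then show ?case
    using cinner_poly_op_weight_nonneg[OF assms(1,2) sos_cert_weighted_square] by simp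
qed (simp add: poly_op_add cinner.add_right)

lemma sos_cert_linear_root_below: "r < 0 \<Longrightarrow> sos_cert M [:-r, 1:]"
proof -
  assume "r < 0"
  then have "[:-r, 1:] = [:sqrt (- r):] * [:sqrt (- r):] + [:0, 1:]"
    by (simp flip: poly_eq_poly_eq_iff)
  then show ?thesis
    by (metis sos_cert_square sos_cert_weight sos_cert_add insertCI)
qed

lemma sos_cert_linear_root_above: "r > M \<Longrightarrow> sos_cert M [:r, -1:]"
proof -
  assume "r > M"
  then have "[:r, -1:] = [:sqrt (r - M):] * [:sqrt (r - M):] + [:M, -1:]"
    by (simp flip: poly_eq_poly_eq_iff)
  then show ?thesis
    by (metis sos_cert_square sos_cert_weight sos_cert_add insertCI)
qed

lemma sos_cert_quadratic: "sos_cert M [:a\<^sup>2 + b\<^sup>2, -2 * a, 1:]"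
proof -
  have "[:a\<^sup>2 + b\<^sup>2, -2 * a, 1:] = [:-a, 1:] * [:-a, 1:] + [:b:] * [:b:]"
    by (simp add: power2_eq_square algebra_simps flip: poly_eq_poly_eq_iff)
  then show ?thesis
    by (metis sos_cert_square sos_cert_add)
qed

lemma sos_cert_factor:
  assumes "degree q \<noteq> 0" "\<forall>u\<in>{0..M}. poly q u \<noteq> 0"
  obtains w d where "q = w * d" "sos_cert M w" "\<forall>u\<in>{0..M}. poly w u > 0" "degree w \<noteq> 0"
  using real_poly_linear_or_quadratic_factor[OF assms(1)]
proof (elim disjE exE conjE)
  fix r d
  assume q: "q = [:-r, 1:] * d"
  then have "r < 0 \<or> r > M"
    using assms(2) by fastforce
  then show thesis
  proof
    assume "r < 0"
    then show thesis
      using that[OF q sos_cert_linear_root_below] by auto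
  next
    assume "r > M"
    moreover have "q = [:r, -1:] * - d"
      using q by simp
    moreover have "\<forall>u\<in>{0..M}. poly [:r, -1:] u > 0"
      using \<open>r > M\<close> by auto
    ultimately show thesis
      using that[of "[:r, -1:]" "- d"] sos_cert_linear_root_above by simp
  qed
next
  fix a b d
  assume "b \<noteq> 0" and q: "q = [:a\<^sup>2 + b\<^sup>2, -2 * a, 1:] * d"
  have "poly [:a\<^sup>2 + b\<^sup>2, -2 * a, 1:] u > 0" for u
  proof -
    have "poly [:a\<^sup>2 + b\<^sup>2, -2 * a, 1:] u = (u - a)\<^sup>2 + b\<^sup>2"
      by (simp add: power2_eq_square algebra_simps)
    moreover have "(u - a)\<^sup>2 + b\<^sup>2 > 0"
      using \<open>b \<noteq> 0\<close> by (simp add: add_nonneg_pos)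
    ultimately show ?thesis
      by linarith
  qed
  then show thesis
    using that[OF q sos_cert_quadratic] by simp
qed

lemma sos_cert_of_positive:
  assumes "M > 0" "\<forall>u\<in>{0..M}. poly q u > 0"
  shows "sos_cert M q"
  using assms(2)
proof (induction "degree q" arbitrary: q rule: less_induct)
  case less
  show ?case
  proof (cases "degree q = 0")
    case True
    then obtain c where "q = [:c:]" and "c > 0"
      using less.prems assms(1) by (metis atLeastAtMost_iff degree_0_id less_eq_real_def poly_const_conv)
    then have "q = [:sqrt c:] * [:sqrt c:]"
      by simp
    then show ?thesis
      by (metis sos_cert_square)
  next
    case False
    then obtain w d where q: "q = w * d" and w: "sos_cert M w" "\<forall>u\<in>{0..M}. poly w u > 0" "degree w \<noteq> 0"
      using sos_cert_factor less.prems by (metis less_irrefl)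
    then have "d \<noteq> 0" and "w \<noteq> 0"
      using False by auto
    then have "degree d < degree q"
      using q w(3) by (simp add: degree_mult_eq)
    moreover have "\<forall>u\<in>{0..M}. poly d u > 0"
      using less.prems w(2) unfolding q by (auto intro: zero_less_mult_pos)
    ultimately show ?thesis
      using q w(1) less.hyps sos_cert_mult[OF assms(1)] by blast
  qed
qed

text \<open>A von Neumann type inequality: \<open>e\<^sup>2 - p\<^sup>2\<close> is positive on \<open>[0, \<parallel>T\<parallel>]\<close>, so its certificate
  makes \<open>e\<^sup>2 - p(T)\<^sup>2\<close> a positive operator.\<close>
lemma norm_poly_op_le:
  assumes T: "positive_op T" and p: "\<forall>u\<in>{0..onorm T}. \<bar>poly p u\<bar> < e"
  shows "norm (poly_op p T x) \<le> e * norm x"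
proof -
  have bl: "bounded_linear T"
    using T by (rule positive_op_bounded_linear)
  have lin: "linear T"
    using bl by (rule bounded_linear.linear)
  have e: "\<bar>poly p 0\<bar> < e"
    using p onorm_pos_le[OF bl] by simp
  show ?thesis
  proof (cases "onorm T = 0")
    case True
    then have "T v = 0" for v
      using onorm_eq_0[OF bl] by auto
    then have "poly_op p T x = poly p 0 *\<^sub>R x"
      by (induction p) (simp_all add: poly_op_pCons[OF lin])
    then show ?thesis
      using mult_right_mono[OF less_imp_le[OF e] norm_ge_zero, of x] by simp
  next
    case False
    then have M: "onorm T > 0"
      using onorm_pos_le[OF bl] by linarith
    have "\<forall>u\<in>{0..onorm T}. poly ([:e\<^sup>2:] - p * p) u > 0"
    proof
      fix u
      assume "u \<in> {0..onorm T}"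
      then have pu: "\<bar>poly p u\<bar> < e"
        using p by blast
      have "\<bar>poly p u\<bar> * \<bar>poly p u\<bar> < e * e"
        using mult_strict_mono'[OF pu pu abs_ge_zero abs_ge_zero] .
      then show "poly ([:e\<^sup>2:] - p * p) u > 0"
        by (simp add: abs_mult_self_eq power2_eq_square)
    qed
    then have "sos_cert (onorm T) ([:e\<^sup>2:] - p * p)"
      by (rule sos_cert_of_positive[OF M])
    then have "0 \<le> Re (cinner x (poly_op ([:e\<^sup>2:] - p * p) T x))"
      by (rule sos_cert_poly_op_nonneg[OF T order.refl])
    also have "cinner x (poly_op ([:e\<^sup>2:] - p * p) T x)
        = e\<^sup>2 *\<^sub>R cinner x x - cinner (poly_op p T x) (poly_op p T x)"
      by (simp only: poly_op_diff poly_op_const[OF lin] poly_op_mult[OF lin] cinner.diff_right cinner.scaleR_right selfadjoint_poly_op[OF lin positive_op_selfadjoint[OF T]])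
    finally have "(norm (poly_op p T x))\<^sup>2 \<le> (e * norm x)\<^sup>2"
      by (simp add: cinner_self power_mult_distrib)
    moreover have "0 \<le> e * norm x"
      using e abs_ge_zero[of "poly p 0"] by simp
    ultimately show ?thesis
      by (rule power2_le_imp_le)
  qed
qed

section \<open>Continuous functional calculus\<close>

definition poly_blinfun :: "real poly \<Rightarrow> ('a::chilbert \<Rightarrow> 'a) \<Rightarrow> 'a \<Rightarrow>\<^sub>L 'a" where
  "poly_blinfun p T = Blinfun (poly_op p T)"

lemma blinfun_apply_poly_blinfun:
  "bounded_linear T \<Longrightarrow> blinfun_apply (poly_blinfun p T) = poly_op p T"
  by (simp add: poly_blinfun_def bounded_linear_Blinfun_apply bounded_linear_poly_op)

lemma poly_blinfun_diff:
  "bounded_linear T \<Longrightarrow> poly_blinfun (p - q) T = poly_blinfun p T - poly_blinfun q T"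
  by (rule blinfun_eqI) (simp add: blinfun.diff_left blinfun_apply_poly_blinfun poly_op_diff)

lemma poly_blinfun_mult:
  "bounded_linear T \<Longrightarrow> poly_blinfun (p * q) T = poly_blinfun p T o\<^sub>L poly_blinfun q T"
  by (rule blinfun_eqI) (simp add: blinfun_apply_poly_blinfun poly_op_mult bounded_linear.linear)

lemma norm_poly_blinfun_le:
  assumes "positive_op T" "\<forall>u\<in>{0..onorm T}. \<bar>poly p u\<bar> < e"
  shows "norm (poly_blinfun p T) \<le> e"
proof (rule norm_blinfun_bound)
  have "\<bar>poly p 0\<bar> < e"
    using assms(2) onorm_pos_le[OF positive_op_bounded_linear[OF assms(1)]] by simp
  then show "0 \<le> e"
    using abs_ge_zero[of "poly p 0"] by linarith
  show "norm (blinfun_apply (poly_blinfun p T) x) \<le> e * norm x" for x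
    using norm_poly_op_le[OF assms] by (simp add: blinfun_apply_poly_blinfun positive_op_bounded_linear[OF assms(1)])
qed

lemma norm_blinfun_diff_Blinfun:
  "bounded_linear S \<Longrightarrow> norm (F - Blinfun S) = onorm (\<lambda>x. blinfun_apply F x - S x)"
  unfolding norm_blinfun.rep_eq
  by (rule arg_cong[where f = onorm]) (simp add: fun_eq_iff blinfun.diff_left bounded_linear_Blinfun_apply)

lemma poly_blinfun_uniformly_close:
  assumes T: "positive_op T"
    and P: "uniform_limit {0..onorm T} (\<lambda>n. poly (P n)) f sequentially"
    and Q: "uniform_limit {0..onorm T} (\<lambda>n. poly (Q n)) f sequentially"
    and "e > 0"
  shows "\<exists>N. \<forall>m\<ge>N. \<forall>n\<ge>N. norm (poly_blinfun (P m) T - poly_blinfun (Q n) T) < e"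
proof -
  have e4: "e / 4 > 0"
    using \<open>e > 0\<close> by simp
  obtain N1 where N1: "\<forall>m\<ge>N1. \<forall>u\<in>{0..onorm T}. dist (poly (P m) u) (f u) < e / 4"
    using uniform_limitD[OF P e4] unfolding eventually_sequentially by blast
  obtain N2 where N2: "\<forall>n\<ge>N2. \<forall>u\<in>{0..onorm T}. dist (poly (Q n) u) (f u) < e / 4"
    using uniform_limitD[OF Q e4] unfolding eventually_sequentially by blast
  have "norm (poly_blinfun (P m) T - poly_blinfun (Q n) T) < e" if "m \<ge> max N1 N2" "n \<ge> max N1 N2" for m n
  proof -
    have "\<forall>u\<in>{0..onorm T}. \<bar>poly (P m - Q n) u\<bar> < e / 2"
    proof
      fix u
      assume "u \<in> {0..onorm T}"
      then have "\<bar>poly (P m) u - f u\<bar> < e / 4" "\<bar>poly (Q n) u - f u\<bar> < e / 4"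
        using N1 N2 that by (auto simp: dist_real_def)
      then show "\<bar>poly (P m - Q n) u\<bar> < e / 2"
        unfolding poly_diff by arith
    qed
    then have "norm (poly_blinfun (P m - Q n) T) \<le> e / 2"
      by (rule norm_poly_blinfun_le[OF T])
    then show ?thesis
      using \<open>e > 0\<close> by (simp add: poly_blinfun_diff positive_op_bounded_linear[OF T])
  qed
  then show ?thesis
    by blast
qed

lemma poly_blinfun_Cauchy:
  assumes "positive_op T" "uniform_limit {0..onorm T} (\<lambda>n. poly (P n)) f sequentially"
  shows "Cauchy (\<lambda>n. poly_blinfun (P n) T)"
  using poly_blinfun_uniformly_close[OF assms assms(2)] by (rule CauchyI)

lemma poly_blinfun_tendsto_cong:
  assumes T: "positive_op T"
    and P: "uniform_limit {0..onorm T} (\<lambda>n. poly (P n)) f sequentially"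
    and Q: "uniform_limit {0..onorm T} (\<lambda>n. poly (Q n)) f sequentially"
    and lim: "(\<lambda>n. poly_blinfun (P n) T) \<longlonglongrightarrow> B"
  shows "(\<lambda>n. poly_blinfun (Q n) T) \<longlonglongrightarrow> B"
proof -
  have "(\<lambda>n. poly_blinfun (Q n) T - poly_blinfun (P n) T) \<longlonglongrightarrow> 0"
  proof (rule LIMSEQ_I)
    fix e :: real
    assume "e > 0"
    then obtain N where "\<forall>m\<ge>N. \<forall>n\<ge>N. norm (poly_blinfun (Q m) T - poly_blinfun (P n) T) < e"
      using poly_blinfun_uniformly_close[OF T Q P] by blast
    then show "\<exists>N. \<forall>n\<ge>N. norm (poly_blinfun (Q n) T - poly_blinfun (P n) T - 0) < e"
      by auto
  qed
  from tendsto_add[OF this lim] show ?thesis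
    by simp
qed

lemma tendsto_Blinfun_iff_onorm:
  assumes "bounded_linear S"
  shows "(F \<longlonglongrightarrow> Blinfun S) \<longleftrightarrow> (\<lambda>n. onorm (\<lambda>x. blinfun_apply (F n) x - S x)) \<longlonglongrightarrow> 0"
proof -
  have "(F \<longlonglongrightarrow> Blinfun S) \<longleftrightarrow> (\<lambda>n. norm (F n - Blinfun S)) \<longlonglongrightarrow> 0"
    by (simp add: tendsto_norm_zero_iff LIM_zero_iff)
  then show ?thesis
    by (simp add: norm_blinfun_diff_Blinfun[OF assms])
qed

lemma bounded_clinear_blinfun_limit:
  assumes lim: "F \<longlonglongrightarrow> B" and clinear: "\<And>n c x. blinfun_apply (F n) (scaleC c x) = scaleC c (F n x)"
  shows "bounded_clinear (blinfun_apply B)"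
proof -
  have "blinfun_apply B (scaleC c x) = scaleC c (blinfun_apply B x)" for c x
  proof (rule LIMSEQ_unique)
    show "(\<lambda>n. F n (scaleC c x)) \<longlonglongrightarrow> blinfun_apply B (scaleC c x)"
      using blinfun.tendsto[OF lim tendsto_const] .
    show "(\<lambda>n. F n (scaleC c x)) \<longlonglongrightarrow> scaleC c (blinfun_apply B x)"
      unfolding clinear by (rule bounded_linear.tendsto[OF bounded_linear_scaleC blinfun.tendsto[OF lim tendsto_const]])
  qed
  then show ?thesis
    by (simp add: bounded_clinear_def blinfun.bounded_linear_right)
qed

lemma fcalc_eqI:
  fixes T :: "'a::chilbert \<Rightarrow> 'a"
  assumes T: "positive_op T" and P: "uniform_limit {0..onorm T} (\<lambda>n. poly (P n)) f sequentially"
    and lim: "(\<lambda>n. poly_blinfun (P n) T) \<longlonglongrightarrow> B" and B: "bounded_clinear (blinfun_apply B)"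
  shows "fcalc T f = blinfun_apply B"
proof -
  have bl: "bounded_linear T"
    using T by (rule positive_op_bounded_linear)
  have approx_iff: "(\<forall>e>0. \<forall>\<^sub>F n in sequentially. \<forall>u\<in>{0..onorm T}. \<bar>poly (Q n) u - f u\<bar> < e)
      \<longleftrightarrow> uniform_limit {0..onorm T} (\<lambda>n. poly (Q n)) f sequentially" for Q
    by (simp add: uniform_limit_iff dist_real_def)
  have onorm_iff: "(\<lambda>n. onorm (\<lambda>x. poly_op (Q n) T x - S x)) \<longlonglongrightarrow> 0 \<longleftrightarrow> (\<lambda>n. poly_blinfun (Q n) T) \<longlonglongrightarrow> Blinfun S"
    if "bounded_linear S" for Q S
    using tendsto_Blinfun_iff_onorm[OF that] by (simp add: blinfun_apply_poly_blinfun[OF bl])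
  show ?thesis
    unfolding fcalc_def approx_iff
  proof (rule the_equality)
    show "bounded_clinear (blinfun_apply B) \<and> (\<forall>Q. uniform_limit {0..onorm T} (\<lambda>n. poly (Q n)) f sequentially
        \<longrightarrow> (\<lambda>n. onorm (\<lambda>x. poly_op (Q n) T x - blinfun_apply B x)) \<longlonglongrightarrow> 0)"
    proof (intro conjI allI impI)
      fix Q
      assume "uniform_limit {0..onorm T} (\<lambda>n. poly (Q n)) f sequentially"
      then have "(\<lambda>n. poly_blinfun (Q n) T) \<longlonglongrightarrow> Blinfun (blinfun_apply B)"
        unfolding blinfun_apply_inverse by (rule poly_blinfun_tendsto_cong[OF T P _ lim])
      then show "(\<lambda>n. onorm (\<lambda>x. poly_op (Q n) T x - blinfun_apply B x)) \<longlonglongrightarrow> 0"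
        by (rule onorm_iff[THEN iffD2, OF blinfun.bounded_linear_right])
    qed (rule B)
  next
    fix S
    assume S: "bounded_clinear S \<and> (\<forall>Q. uniform_limit {0..onorm T} (\<lambda>n. poly (Q n)) f sequentially
        \<longrightarrow> (\<lambda>n. onorm (\<lambda>x. poly_op (Q n) T x - S x)) \<longlonglongrightarrow> 0)"
    then have S_bl: "bounded_linear S"
      by (simp add: bounded_clinear_def)
    have "(\<lambda>n. onorm (\<lambda>x. poly_op (P n) T x - S x)) \<longlonglongrightarrow> 0"
      using conjunct2[OF S, THEN spec[of _ P]] P by (rule mp)
    then have "(\<lambda>n. poly_blinfun (P n) T) \<longlonglongrightarrow> Blinfun S"
      by (rule onorm_iff[OF S_bl, THEN iffD1])
    then have "Blinfun S = B"
      using lim by (rule LIMSEQ_unique)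
    then show "S = blinfun_apply B"
      using bounded_linear_Blinfun_apply[OF S_bl] by auto
  qed
qed

lemma fcalc_tendsto:
  fixes T :: "'a::chilbert \<Rightarrow> 'a"
  assumes T: "positive_op T" and P: "uniform_limit {0..onorm T} (\<lambda>n. poly (P n)) f sequentially"
  shows "bounded_clinear (fcalc T f)"
    and "(\<lambda>n. poly_blinfun (P n) T) \<longlonglongrightarrow> Blinfun (fcalc T f)"
proof -
  obtain B where lim: "(\<lambda>n. poly_blinfun (P n) T) \<longlonglongrightarrow> B"
    using poly_blinfun_Cauchy[OF T P] convergent_LIMSEQ_iff Cauchy_convergent_iff by blast
  have "bounded_clinear (blinfun_apply B)"
    using lim by (rule bounded_clinear_blinfun_limit)
      (simp add: blinfun_apply_poly_blinfun positive_op_bounded_linear[OF T] poly_op_scaleC positive_op_bounded_clinear[OF T])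
  moreover have "fcalc T f = blinfun_apply B"
    using T P lim calculation by (rule fcalc_eqI)
  ultimately show "bounded_clinear (fcalc T f)" and "(\<lambda>n. poly_blinfun (P n) T) \<longlonglongrightarrow> Blinfun (fcalc T f)"
    using lim by (simp_all add: blinfun_apply_inverse)
qed

lemma fcalc_apply_tendsto:
  assumes "positive_op T" "uniform_limit {0..onorm T} (\<lambda>n. poly (P n)) f sequentially"
  shows "(\<lambda>n. poly_op (P n) T x) \<longlonglongrightarrow> fcalc T f x"
proof -
  have "(\<lambda>n. blinfun_apply (poly_blinfun (P n) T) x) \<longlonglongrightarrow> blinfun_apply (Blinfun (fcalc T f)) x"
    using blinfun.tendsto[OF fcalc_tendsto(2)[OF assms] tendsto_const] .
  then show ?thesis
    using fcalc_tendsto(1)[OF assms]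
    by (simp add: blinfun_apply_poly_blinfun positive_op_bounded_linear[OF assms(1)]
        bounded_linear_Blinfun_apply bounded_clinear_imp_bounded_linear)
qed

lemma real_polynomial_function_imp_poly:
  assumes "real_polynomial_function g"
  shows "\<exists>p. g = poly p"
proof -
  obtain a n where "g = (\<lambda>x. \<Sum>i\<le>n. a i * x ^ i)"
    using assms real_polynomial_function_iff_sum by blast
  then have "g = poly (\<Sum>i\<le>n. monom (a i) i)"
    by (simp add: fun_eq_iff poly_sum poly_monom)
  then show ?thesis ..
qed

lemma poly_uniform_approximation:
  fixes f :: "real \<Rightarrow> real"
  assumes "continuous_on {a..b} f"
  obtains P where "uniform_limit {a..b} (\<lambda>n. poly (P n)) f sequentially"
proof -
  obtain g where g: "uniform_limit {a..b} g f sequentially" "\<And>n. polynomial_function (g n)"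
    using Stone_Weierstrass_uniform_limit[OF compact_Icc assms] by blast
  then have "\<forall>n. \<exists>p. g n = poly p"
    by (simp add: real_polynomial_function_imp_poly flip: real_polynomial_function_eq)
  then obtain P where "\<And>n. g n = poly (P n)"
    by metis
  then have "g = (\<lambda>n. poly (P n))"
    by blast
  then show ?thesis
    using g(1) that by simp
qed

lemma fcalc_cong:
  assumes "\<forall>u\<in>{0..onorm T}. f u = g u"
  shows "fcalc T f = fcalc T g"
  unfolding fcalc_def using assms by simp

lemma fcalc_ident:
  assumes "positive_op T"
  shows "fcalc T (\<lambda>u. u) = T"
proof -
  have bl: "bounded_linear T"
    using assms by (rule positive_op_bounded_linear)
  have X: "uniform_limit {0..onorm T} (\<lambda>n. poly [:0, 1:]) (\<lambda>u. u) sequentially"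
    by (simp add: uniform_limit_iff)
  then have "(\<lambda>n. poly_blinfun [:0, 1:] T) \<longlonglongrightarrow> Blinfun (fcalc T (\<lambda>u. u))"
    by (rule fcalc_tendsto(2)[OF assms])
  moreover have "poly_op [:0, 1:] T = T"
    using poly_op_X[OF bounded_linear.linear[OF bl]] by blast
  ultimately have "Blinfun T = Blinfun (fcalc T (\<lambda>u. u))"
    by (simp add: poly_blinfun_def LIMSEQ_const_iff)
  then have "blinfun_apply (Blinfun T) = blinfun_apply (Blinfun (fcalc T (\<lambda>u. u)))"
    by simp
  then show ?thesis
    using fcalc_tendsto(1)[OF assms X] bl
    by (simp add: bounded_linear_Blinfun_apply bounded_clinear_imp_bounded_linear)
qed

lemma selfadjoint_fcalc:
  assumes T: "positive_op T" and f: "continuous_on {0..onorm T} f"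
  shows "selfadjoint (fcalc T f)"
  unfolding selfadjoint_def
proof (intro allI)
  fix x y
  obtain P where P: "uniform_limit {0..onorm T} (\<lambda>n. poly (P n)) f sequentially"
    using poly_uniform_approximation[OF f] .
  note lim = fcalc_apply_tendsto[OF T P]
  have sa: "cinner (poly_op (P n) T x) y = cinner x (poly_op (P n) T y)" for n
    using selfadjoint_poly_op[OF bounded_linear.linear positive_op_selfadjoint[OF T]]
      positive_op_bounded_linear[OF T] by blast
  show "cinner (fcalc T f x) y = cinner x (fcalc T f y)"
  proof (rule LIMSEQ_unique)
    show "(\<lambda>n. cinner (poly_op (P n) T x) y) \<longlonglongrightarrow> cinner (fcalc T f x) y"
      by (rule cinner.tendsto[OF lim tendsto_const])
    show "(\<lambda>n. cinner (poly_op (P n) T x) y) \<longlonglongrightarrow> cinner x (fcalc T f y)"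
      unfolding sa by (rule cinner.tendsto[OF tendsto_const lim])
  qed
qed

lemma fcalc_mult:
  assumes T: "positive_op T" and f: "continuous_on {0..onorm T} f" and g: "continuous_on {0..onorm T} g"
  shows "fcalc T (\<lambda>u. f u * g u) x = fcalc T f (fcalc T g x)"
proof -
  have bl: "bounded_linear T"
    using T by (rule positive_op_bounded_linear)
  obtain P where P: "uniform_limit {0..onorm T} (\<lambda>n. poly (P n)) f sequentially"
    using poly_uniform_approximation[OF f] .
  obtain Q where Q: "uniform_limit {0..onorm T} (\<lambda>n. poly (Q n)) g sequentially"
    using poly_uniform_approximation[OF g] .
  have "uniform_limit {0..onorm T} (\<lambda>n u. poly (P n) u * poly (Q n) u) (\<lambda>u. f u * g u) sequentially"
    using uniform_lim_mult[OF P Q compact_imp_bounded[OF compact_continuous_image[OF f compact_Icc]]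
        compact_imp_bounded[OF compact_continuous_image[OF g compact_Icc]]] .
  moreover have "(\<lambda>n. poly (P n * Q n)) = (\<lambda>n u. poly (P n) u * poly (Q n) u)"
    by (simp add: fun_eq_iff)
  ultimately have PQ: "uniform_limit {0..onorm T} (\<lambda>n. poly (P n * Q n)) (\<lambda>u. f u * g u) sequentially"
    by simp
  have lim: "(\<lambda>n. poly_blinfun (P n) T o\<^sub>L poly_blinfun (Q n) T) \<longlonglongrightarrow> (Blinfun (fcalc T f) o\<^sub>L Blinfun (fcalc T g))"
    by (rule bounded_bilinear.tendsto[OF bounded_bilinear_blinfun_compose fcalc_tendsto(2)[OF T P] fcalc_tendsto(2)[OF T Q]])
  have "(\<lambda>n. poly_blinfun (P n) T o\<^sub>L poly_blinfun (Q n) T) \<longlonglongrightarrow> Blinfun (fcalc T (\<lambda>u. f u * g u))"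
    using fcalc_tendsto(2)[OF T PQ] by (simp add: poly_blinfun_mult[OF bl])
  then have "Blinfun (fcalc T (\<lambda>u. f u * g u)) = (Blinfun (fcalc T f) o\<^sub>L Blinfun (fcalc T g))"
    using lim by (rule LIMSEQ_unique)
  then have "blinfun_apply (Blinfun (fcalc T (\<lambda>u. f u * g u))) x = blinfun_apply (Blinfun (fcalc T f) o\<^sub>L Blinfun (fcalc T g)) x"
    by simp
  then show ?thesis
    using fcalc_tendsto(1)[OF T P] fcalc_tendsto(1)[OF T Q] fcalc_tendsto(1)[OF T PQ]
    by (simp add: bounded_linear_Blinfun_apply bounded_clinear_imp_bounded_linear)
qed

section \<open>Real powers\<close>

lemma continuous_on_powr_Icc: "s > 0 \<Longrightarrow> continuous_on {0..M} (\<lambda>u::real. u powr s)"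
  by (rule continuous_on_powr') (auto intro: continuous_intros)

lemma op_pow_one:
  assumes "positive_op T"
  shows "op_pow T 1 = T"
proof -
  have "op_pow T 1 = fcalc T (\<lambda>u. u powr 1)"
    by (simp add: op_pow_def)
  also have "\<dots> = fcalc T (\<lambda>u. u)"
    by (rule fcalc_cong) simp
  finally show ?thesis
    by (simp add: fcalc_ident[OF assms])
qed

lemma op_pow_add:
  assumes T: "positive_op T" and "0 \<le> s" "0 \<le> t"
  shows "op_pow T s (op_pow T t x) = op_pow T (s + t) x"
proof (cases "s = 0 \<or> t = 0")
  case True
  then show ?thesis
    by (auto simp: op_pow_def)
next
  case False
  then have "s > 0" "t > 0" "s + t \<noteq> 0"
    using assms(2,3) by auto
  then have "op_pow T s (op_pow T t x) = fcalc T (\<lambda>u. u powr s) (fcalc T (\<lambda>u. u powr t) x)"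
    by (simp add: op_pow_def)
  also have "\<dots> = fcalc T (\<lambda>u. u powr s * u powr t) x"
    by (rule fcalc_mult[symmetric, OF T continuous_on_powr_Icc[OF \<open>s > 0\<close>] continuous_on_powr_Icc[OF \<open>t > 0\<close>]])
  also have "\<dots> = op_pow T (s + t) x"
    using \<open>s + t \<noteq> 0\<close> by (simp add: op_pow_def powr_add)
  finally show ?thesis .
qed

lemma bounded_clinear_op_pow:
  assumes T: "positive_op T" and "0 \<le> s"
  shows "bounded_clinear (op_pow T s)"
proof (cases "s = 0")
  case True
  then show ?thesis
    by (simp add: op_pow_def bounded_clinear_def id_def)
next
  case False
  then have "s > 0"
    using assms(2) by simp
  obtain P where "uniform_limit {0..onorm T} (\<lambda>n. poly (P n)) (\<lambda>u. u powr s) sequentially"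
    using poly_uniform_approximation[OF continuous_on_powr_Icc[OF \<open>s > 0\<close>]] .
  then have "bounded_clinear (fcalc T (\<lambda>u. u powr s))"
    by (rule fcalc_tendsto(1)[OF T])
  then show ?thesis
    using False by (simp add: op_pow_def)
qed

lemma selfadjoint_op_pow:
  assumes T: "positive_op T" and "0 \<le> s"
  shows "selfadjoint (op_pow T s)"
proof (cases "s = 0")
  case True
  then show ?thesis
    by (simp add: op_pow_def selfadjoint_def)
next
  case False
  then have "s > 0"
    using assms(2) by simp
  have "selfadjoint (fcalc T (\<lambda>u. u powr s))"
    by (rule selfadjoint_fcalc[OF T continuous_on_powr_Icc[OF \<open>s > 0\<close>]])
  then show ?thesis
    using False by (simp add: op_pow_def)
qed

lemma cinner_op_pow_split:
  assumes T: "positive_op T" and "0 \<le> t" "t \<le> 1"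
  shows "cinner (T x) y = cinner (op_pow T t x) (op_pow T (1 - t) y)"
proof -
  have "T x = op_pow T (1 - t) (op_pow T t x)"
    using op_pow_add[OF T, of "1 - t" t] op_pow_one[OF T] assms(2,3) by simp
  then show ?thesis
    using selfadjoint_op_pow[OF T, of "1 - t"] assms(3) by (simp add: selfadjoint_def)
qed

theorem proposition2p3:
  fixes T :: "'a::chilbert \<Rightarrow> 'a" and x y :: 'a and t :: real
  assumes "positive_op T" and "0 \<le> t" and "t \<le> 1"
  shows "(norm (T x) * norm (T y) \<noteq> 0 \<longrightarrow>
            cmod (cinner (T x) y) \<le>
              (norm (op_pow T t x)
                 - (INF l::complex. (norm (op_pow T t x - scaleC l (op_pow T (1 - t) y)))\<^sup>2)
                   / (2 * norm (op_pow T t x)))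
              * norm (op_pow T (1 - t) y))
       \<and> (norm (T x) * norm (T y) = 0 \<longrightarrow>
            cmod (cinner (T x) y) \<le> norm (op_pow T t x) * norm (op_pow T (1 - t) y))
       \<and> (norm (T x) * norm (T y) \<noteq> 0 \<longrightarrow>
            cmod (cinner (T x) y) \<le>
              (norm (op_pow T (1/2) x)
                 - (INF l::complex. (norm (op_pow T (1/2) (x - scaleC l y)))\<^sup>2)
                   / (2 * norm (op_pow T (1/2) x)))
              * norm (op_pow T (1/2) y))
       \<and> (norm (T x) * norm (T y) = 0 \<longrightarrow>
            cmod (cinner (T x) y) \<le> norm (op_pow T (1/2) x) * norm (op_pow T (1/2) y))"
proof -
  have split_t: "cinner (T x) y = cinner (op_pow T t x) (op_pow T (1 - t) y)"
    using cinner_op_pow_split[OF assms] .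
  have split_half: "cinner (T x) y = cinner (op_pow T (1/2) x) (op_pow T (1/2) y)"
    using cinner_op_pow_split[OF assms(1), of "1/2"] by simp
  have half_linear: "op_pow T (1/2) (x - scaleC l y) = op_pow T (1/2) x - scaleC l (op_pow T (1/2) y)" for l
    using bounded_clinear_op_pow[OF assms(1), of "1/2"]
    by (simp add: bounded_clinear_scaleC linear_diff bounded_linear.linear bounded_clinear_imp_bounded_linear)
  have "cmod (cinner (T x) y) \<le> (norm (op_pow T t x)
      - (INF l::complex. (norm (op_pow T t x - scaleC l (op_pow T (1 - t) y)))\<^sup>2) / (2 * norm (op_pow T t x)))
      * norm (op_pow T (1 - t) y)"
    unfolding split_t by (rule refined_cauchy_schwarz)
  moreover have "cmod (cinner (T x) y) \<le> norm (op_pow T t x) * norm (op_pow T (1 - t) y)"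
    unfolding split_t by (rule cauchy_schwarz)
  moreover have "cmod (cinner (T x) y) \<le> (norm (op_pow T (1/2) x)
      - (INF l::complex. (norm (op_pow T (1/2) (x - scaleC l y)))\<^sup>2) / (2 * norm (op_pow T (1/2) x)))
      * norm (op_pow T (1/2) y)"
    unfolding split_half half_linear by (rule refined_cauchy_schwarz)
  moreover have "cmod (cinner (T x) y) \<le> norm (op_pow T (1/2) x) * norm (op_pow T (1/2) y)"
    unfolding split_half by (rule cauchy_schwarz)
  ultimately show ?thesis
    by blast
qed

end
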